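(* Let $F^*$ be the set of activated blue edges of an optimal solution of an instance of $\mathsf{StackMST}(\gamma,\Delta)$ with red tree $T$ of height $h$ rooted at its center $v_0$, and let $r(F^* )$ be its (optimal) revenue. Then $$r(F^* )\le c(T)-\sum_{i=1}^h\ \sum_{H\in\mathrm{comp}(G^*_i)}\ \min_{v\in V(H)}c_i(v_0,v).$$
   Context: $\mathsf{StackMST}(\gamma,\Delta)$: given a tree $T=(V,E(T))$ with red edge costs $c(e)\ge0$, activation costs $\gamma(e)\ge0$ for every pair $e\notin E(T)$ of vertices, and a budget $\Delta$, the leader selects a set $F$ of such pairs with $\sum_{e\in F}\gamma(e)\le\Delta$ and prices $p:F\to\mathbb{R}^+$; the follower computes a minimum spanning tree $M$ of $(V,E(T)\cup F)$ (weights $c$ on red edges, $p$ on $F$), breaking ties in favor of the leader; the leader's revenue $\sum_{e\in F\cap M}p(e)$ is to be maximized. $c(T)$ is the total red cost. Root $T$ at its center $v_0$; $h$ is its height. For $1\le i\le h$, let $V_i=\{v_1,\dots,v_{\ell_i}\}$ be the vertices at depth $i$ and $E_i$ the set of edges joining vertices of $V_i$ to their parents. $T_i$ is the star centered at $v_0$ with leaves $v_1,\dots,v_{\ell_i}$, with $c_i(v_0,v)=c(u,v)$ where $u$ is the parent of $v$ in $T$; by convention $c_i(v_0,v_0)=0$. Let $\hat T_0,\hat T_1,\dots,\hat T_{\ell_i}$ be the connected components of $T-E_i$, with $v_0\in V(\hat T_0)$ and $v_j\in V(\hat T_j)$ for $j\ge1$. Let $F^*_i$ be the set of pairs $(v_j,v_q)$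 such that there is $(u,v)\in F^*$ with $u\in V(\hat T_j)$, $v\in V(\hat T_q)$, $j\ne q$, and let $G^*_i=(\{v_0,\dots,v_{\ell_i}\},F^*_i)$; $\mathrm{comp}(G^*_i)$ denotes its set of connected components. *)

theory Defs
  imports Complex_Main
begin

definition pairs :: "'a set \<Rightarrow> 'a set set" where
  "pairs V = {{u, v} | u v. u \<in> V \<and> v \<in> V \<and> u \<noteq> v}"

definition adj :: "'a set set \<Rightarrow> ('a \<times> 'a) set" where
  "adj E = {(x, y). {x, y} \<in> E}"

definition connected_graph :: "'a set \<Rightarrow> 'a set set \<Rightarrow> bool" where
  "connected_graph V E \<longleftrightarrow> (\<forall>x\<in>V. \<forall>y\<in>V. (x, y) \<in> (adj E)\<^sup>*)"

definition is_tree :: "'a set \<Rightarrow> 'a set set \<Rightarrow> bool" where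
  "is_tree V E \<longleftrightarrow> finite V \<and> V \<noteq> {} \<and> E \<subseteq> pairs V \<and> connected_graph V E
                     \<and> card E = card V - 1"

definition comps :: "'a set \<Rightarrow> 'a set set \<Rightarrow> 'a set set" where
  "comps R E = {{y \<in> R. (x, y) \<in> (adj E)\<^sup>*} | x. x \<in> R}"

definition gdist :: "'a set set \<Rightarrow> 'a \<Rightarrow> 'a \<Rightarrow> nat" where
  "gdist E x y = (LEAST n. (x, y) \<in> (adj E) ^^ n)"

definition ecc :: "'a set \<Rightarrow> 'a set set \<Rightarrow> 'a \<Rightarrow> nat" where
  "ecc V E v = Max (gdist E v ` V)"

definition is_center :: "'a set \<Rightarrow> 'a set set \<Rightarrow> 'a \<Rightarrow> bool" where
  "is_center V E v0 \<longleftrightarrow> v0 \<in> V \<and> (\<forall>v\<in>V. ecc V E v0 \<le> ecc V E v)"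

definition is_MST :: "'a set \<Rightarrow> 'a set set \<Rightarrow> ('a set \<Rightarrow> real) \<Rightarrow> 'a set set \<Rightarrow> bool" where
  "is_MST V E w M \<longleftrightarrow> M \<subseteq> E \<and> is_tree V M \<and>
     (\<forall>M'. M' \<subseteq> E \<and> is_tree V M' \<longrightarrow> sum w M \<le> sum w M')"

definition follower_weight :: "('a set \<Rightarrow> real) \<Rightarrow> 'a set set \<Rightarrow> ('a set \<Rightarrow> real) \<Rightarrow> 'a set \<Rightarrow> real" where
  "follower_weight c F p e = (if e \<in> F then p e else c e)"

text \<open>Leader's revenue; ties among minimum spanning trees are broken in favour of the
  leader, i.e. the follower picks an MST maximising the leader's revenue.\<close>
definition revenue :: "'a set \<Rightarrow> 'a set set \<Rightarrow> ('a set \<Rightarrow> real) \<Rightarrow> 'a set set \<Rightarrow> ('a set \<Rightarrow> real) \<Rightarrow> real" where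
  "revenue V ET c F p =
     Max {sum p (F \<inter> M) | M. is_MST V (ET \<union> F) (follower_weight c F p) M}"

definition feasible :: "'a set \<Rightarrow> 'a set set \<Rightarrow> ('a set \<Rightarrow> real) \<Rightarrow> real \<Rightarrow> 'a set set \<Rightarrow> ('a set \<Rightarrow> real) \<Rightarrow> bool" where
  "feasible V ET \<gamma> \<Delta> F p \<longleftrightarrow> F \<subseteq> pairs V - ET \<and> sum \<gamma> F \<le> \<Delta> \<and> (\<forall>e\<in>F. p e \<ge> 0)"

definition optimal :: "'a set \<Rightarrow> 'a set set \<Rightarrow> ('a set \<Rightarrow> real) \<Rightarrow> ('a set \<Rightarrow> real) \<Rightarrow> real
                        \<Rightarrow> 'a set set \<Rightarrow> ('a set \<Rightarrow> real) \<Rightarrow> bool" where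
  "optimal V ET c \<gamma> \<Delta> F p \<longleftrightarrow> feasible V ET \<gamma> \<Delta> F p \<and>
     (\<forall>F' p'. feasible V ET \<gamma> \<Delta> F' p' \<longrightarrow> revenue V ET c F' p' \<le> revenue V ET c F p)"

definition depth :: "'a set set \<Rightarrow> 'a \<Rightarrow> 'a \<Rightarrow> nat" where
  "depth ET v0 v = gdist ET v0 v"

definition height :: "'a set \<Rightarrow> 'a set set \<Rightarrow> 'a \<Rightarrow> nat" where
  "height V ET v0 = ecc V ET v0"

definition layer :: "'a set \<Rightarrow> 'a set set \<Rightarrow> 'a \<Rightarrow> nat \<Rightarrow> 'a set" where
  "layer V ET v0 i = {v \<in> V. depth ET v0 v = i}"

definition parent :: "'a set set \<Rightarrow> 'a \<Rightarrow> 'a \<Rightarrow> 'a" where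
  "parent ET v0 v = (THE u. {u, v} \<in> ET \<and> depth ET v0 u + 1 = depth ET v0 v)"

definition layer_edges :: "'a set \<Rightarrow> 'a set set \<Rightarrow> 'a \<Rightarrow> nat \<Rightarrow> 'a set set" where
  "layer_edges V ET v0 i = {{parent ET v0 v, v} | v. v \<in> layer V ET v0 i}"

definition layer_cost :: "'a set set \<Rightarrow> ('a set \<Rightarrow> real) \<Rightarrow> 'a \<Rightarrow> 'a \<Rightarrow> real" where
  "layer_cost ET c v0 v = (if v = v0 then 0 else c {parent ET v0 v, v})"

definition hatT :: "'a set \<Rightarrow> 'a set set \<Rightarrow> 'a \<Rightarrow> nat \<Rightarrow> 'a \<Rightarrow> 'a set" where
  "hatT V ET v0 i x = {y \<in> V. (x, y) \<in> (adj (ET - layer_edges V ET v0 i))\<^sup>*}"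

text \<open>F^*_i: contracted blue edges between distinct components of T - E_i,
  on vertex set {v0} \<union> V_i.\<close>
definition contracted_edges :: "'a set \<Rightarrow> 'a set set \<Rightarrow> 'a \<Rightarrow> nat \<Rightarrow> 'a set set \<Rightarrow> 'a set set" where
  "contracted_edges V ET v0 i F =
     {{a, b} | a b. a \<in> insert v0 (layer V ET v0 i) \<and> b \<in> insert v0 (layer V ET v0 i) \<and> a \<noteq> b \<and>
        (\<exists>u v. {u, v} \<in> F \<and> u \<in> hatT V ET v0 i a \<and> v \<in> hatT V ET v0 i b)}"

definition Gcomps :: "'a set \<Rightarrow> 'a set set \<Rightarrow> 'a \<Rightarrow> nat \<Rightarrow> 'a set set \<Rightarrow> 'a set set" where
  "Gcomps V ET v0 i F = comps (insert v0 (layer V ET v0 i)) (contracted_edges V ET v0 i F)"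

end

theory Submission
  imports Defs
begin

text \<open>Let M be the follower's minimum spanning tree. Since the red tree T is itself available
  to the follower, the revenue plus the red cost of M is at most c(T). Fix a depth i and a
  component H of G*_i avoiding v0. The components of T - E_i attached to H form a vertex set
  that avoids v0 and that no blue edge leaves; as M is connected, M leaves it through a red edge
  of E_i, which must be the edge joining some vertex of H to its parent. So M pays at least
  the minimum of c_i over H for every such component, and the sets E_i are disjoint, which
  bounds the red cost of M from below by the subtracted double sum.\<close>

lemma sym_adj: "sym (adj E)"
  by (auto simp: adj_def sym_def insert_commute)

lemma rtrancl_adj_sym: "(x, y) \<in> (adj E)\<^sup>* \<Longrightarrow> (y, x) \<in> (adj E)\<^sup>*"
  using sym_rtrancl[OF sym_adj] by (rule symD)

lemma rtrancl_adj_mono: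
  assumes "E \<subseteq> E'" "(x, y) \<in> (adj E)\<^sup>*"
  shows "(x, y) \<in> (adj E')\<^sup>*"
proof -
  have "adj E \<subseteq> adj E'"
    using assms(1) by (auto simp: adj_def)
  then show ?thesis
    using assms(2) rtrancl_mono by blast
qed

lemma rtrancl_adj_insert:
  assumes "(x, y) \<in> (adj (insert {a, b} E))\<^sup>*"
  shows "(x, y) \<in> (adj E)\<^sup>* \<or> (x, a) \<in> (adj E)\<^sup>* \<and> (b, y) \<in> (adj E)\<^sup>*
         \<or> (x, b) \<in> (adj E)\<^sup>* \<and> (a, y) \<in> (adj E)\<^sup>*"
  using assms
proof (induction rule: rtrancl_induct)
  case (step y z)
  then have "{y, z} = {a, b} \<or> (y, z) \<in> adj E"
    by (simp add: adj_def)
  then consider "y = a" "z = b" | "y = b" "z = a" | "(y, z) \<in> adj E"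
    by (auto simp: doubleton_eq_iff)
  then show ?case
    using step.IH by cases (auto intro: rtrancl_into_rtrancl)
qed simp

lemma rtrancl_leaves_set:
  assumes "(x, w) \<in> R\<^sup>*" "x \<in> U" "w \<notin> U"
  obtains y z where "(y, z) \<in> R" "y \<in> U" "z \<notin> U"
  using assms by (induction rule: rtrancl_induct) auto

lemma finite_pairs: "finite V \<Longrightarrow> finite (pairs V)"
  by (rule finite_subset[of _ "Pow V"]) (auto simp: pairs_def)

text \<open>Adding an edge merges at most two reachability classes, so one vertex of S suffices to
  restore pairwise unreachability.\<close>
lemma exists_unreachable_set:
  assumes "finite E" "E \<subseteq> pairs V" "finite V"
  shows "\<exists>S \<subseteq> V. card V \<le> card S + card E \<and>
           (\<forall>x\<in>S. \<forall>y\<in>S. x \<noteq> y \<longrightarrow> (x, y) \<notin> (adj E)\<^sup>*)"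
  using assms(1,2)
proof (induction E rule: finite_induct)
  case empty
  have "(adj {})\<^sup>* = Id"
    by (simp add: adj_def)
  then show ?case
    by (intro exI[of _ V]) auto
next
  case (insert e E)
  then obtain S where S: "S \<subseteq> V" "card V \<le> card S + card E"
      "\<forall>x\<in>S. \<forall>y\<in>S. x \<noteq> y \<longrightarrow> (x, y) \<notin> (adj E)\<^sup>*"
    by auto
  obtain a b where e: "e = {a, b}"
    using insert.prems by (auto simp: pairs_def)
  show ?case
  proof (cases "\<exists>s\<in>S. (s, a) \<in> (adj E)\<^sup>*")
    case True
    then obtain s where s: "s \<in> S" "(a, s) \<in> (adj E)\<^sup>*"
      by (blast dest: rtrancl_adj_sym)
    have "card S \<le> card (S - {s}) + 1"
      using S(1) s(1) assms(3) by (simp add: card_Diff_singleton finite_subset)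
    moreover have "(x, y) \<notin> (adj (insert e E))\<^sup>*"
      if xy: "x \<in> S - {s}" "y \<in> S - {s}" "x \<noteq> y" for x y
    proof
      assume "(x, y) \<in> (adj (insert e E))\<^sup>*"
      then consider "(x, y) \<in> (adj E)\<^sup>*" | "(x, a) \<in> (adj E)\<^sup>*" | "(y, a) \<in> (adj E)\<^sup>*"
        unfolding e by (metis rtrancl_adj_insert rtrancl_adj_sym)
      then show False
        using S(3) s xy by cases (blast intro: rtrancl_trans)+
    qed
    ultimately show ?thesis
      using S insert.hyps by (intro exI[of _ "S - {s}"]) auto
  next
    case False
    have "(x, y) \<notin> (adj (insert e E))\<^sup>*" if xy: "x \<in> S" "y \<in> S" "x \<noteq> y" for x y
    proof
      assume "(x, y) \<in> (adj (insert e E))\<^sup>*"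
      then consider "(x, y) \<in> (adj E)\<^sup>*" | "(x, a) \<in> (adj E)\<^sup>*" | "(y, a) \<in> (adj E)\<^sup>*"
        unfolding e by (metis rtrancl_adj_insert rtrancl_adj_sym)
      then show False
        using S(3) False xy by cases blast+
    qed
    then show ?thesis
      using S insert.hyps by (intro exI[of _ S]) auto
  qed
qed

lemma connected_graph_card_le:
  assumes "finite V" "E \<subseteq> pairs V" "connected_graph V E"
  shows "card V \<le> card E + 1"
proof -
  obtain S where S: "S \<subseteq> V" "card V \<le> card S + card E"
      "\<forall>x\<in>S. \<forall>y\<in>S. x \<noteq> y \<longrightarrow> (x, y) \<notin> (adj E)\<^sup>*"
    using exists_unreachable_set[OF finite_subset[OF assms(2) finite_pairs] assms(2,1)]
      assms(1) by blast
  with assms(3) have "\<forall>x\<in>S. \<forall>y\<in>S. x = y"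
    unfolding connected_graph_def by blast
  moreover have "finite S"
    using S(1) assms(1) by (rule finite_subset)
  ultimately have "card S \<le> 1"
    by (simp add: card_le_Suc0_iff_eq)
  with S(2) show ?thesis
    by linarith
qed

lemma tree_edge_is_bridge:
  assumes T: "is_tree V ET" and e: "{a, b} \<in> ET" and "a \<noteq> b"
  shows "(a, b) \<notin> (adj (ET - {{a, b}}))\<^sup>*"
proof
  let ?E = "ET - {{a, b}}"
  assume ab: "(a, b) \<in> (adj ?E)\<^sup>*"
  have "connected_graph V ?E"
    unfolding connected_graph_def
  proof (intro ballI)
    fix x y
    assume "x \<in> V" "y \<in> V"
    moreover have "insert {a, b} ?E = ET"
      using e by blast
    ultimately have "(x, y) \<in> (adj (insert {a, b} ?E))\<^sup>*"
      using T by (simp add: is_tree_def connected_graph_def)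
    from rtrancl_adj_insert[OF this] show "(x, y) \<in> (adj ?E)\<^sup>*"
      using ab rtrancl_adj_sym[OF ab] by (blast intro: rtrancl_trans)
  qed
  then have "card V \<le> card ?E + 1"
    using T by (intro connected_graph_card_le) (auto simp: is_tree_def)
  moreover have "finite ET"
    using T finite_subset finite_pairs unfolding is_tree_def by blast
  moreover have "card V \<ge> 1"
    using T by (simp add: is_tree_def card_gt_0_iff Suc_le_eq)
  ultimately show False
    using T e by (simp add: is_tree_def card_Diff_singleton)
qed

lemma comps_subset: "H \<in> comps R E \<Longrightarrow> H \<subseteq> R"
  by (auto simp: comps_def)

lemma comps_nonempty: "H \<in> comps R E \<Longrightarrow> H \<noteq> {}"
  by (auto simp: comps_def)

lemma finite_comps: "finite R \<Longrightarrow> finite (comps R E)"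
proof -
  assume "finite R"
  moreover have "comps R E = (\<lambda>x. {y \<in> R. (x, y) \<in> (adj E)\<^sup>*}) ` R"
    by (auto simp: comps_def)
  ultimately show ?thesis
    by simp
qed

lemma comps_closed:
  assumes "H \<in> comps R E" "a \<in> H" "b \<in> R" "(a, b) \<in> adj E"
  shows "b \<in> H"
  using assms by (auto simp: comps_def intro: rtrancl_into_rtrancl)

lemma pairwise_disjnt_comps: "pairwise disjnt (comps R E)"
proof (rule pairwiseI)
  fix H1 H2
  assume H: "H1 \<in> comps R E" "H2 \<in> comps R E" "H1 \<noteq> H2"
  obtain x1 x2 where x: "H1 = {y \<in> R. (x1, y) \<in> (adj E)\<^sup>*}" "H2 = {y \<in> R. (x2, y) \<in> (adj E)\<^sup>*}"
    using H(1,2) by (auto simp: comps_def)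
  show "disjnt H1 H2"
  proof (rule ccontr)
    assume "\<not> disjnt H1 H2"
    then obtain z where "(x1, z) \<in> (adj E)\<^sup>*" "(x2, z) \<in> (adj E)\<^sup>*"
      unfolding x disjnt_iff by blast
    then have "(x1, x2) \<in> (adj E)\<^sup>*" "(x2, x1) \<in> (adj E)\<^sup>*"
      by (metis rtrancl_trans rtrancl_adj_sym)+
    then have "H1 = H2"
      unfolding x by (blast intro: rtrancl_trans)
    with H(3) show False ..
  qed
qed

text \<open>Each block without a nonpositive element is charged to a distinct element of S that it
  contains.\<close>
lemma sum_Min_le_sum_hitting_set:
  fixes f :: "'a \<Rightarrow> real"
  assumes "finite \<H>" "\<forall>H\<in>\<H>. finite H" "pairwise disjnt \<H>" "finite S" "\<forall>v\<in>S. 0 \<le> f v"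
    and hit: "\<forall>H\<in>\<H>. (\<exists>x\<in>H. f x \<le> 0) \<or> H \<inter> S \<noteq> {}"
  shows "(\<Sum>H\<in>\<H>. Min (f ` H)) \<le> sum f S"
proof -
  define \<B> where "\<B> = {H \<in> \<H>. \<forall>x\<in>H. 0 < f x}"
  have "\<forall>H\<in>\<B>. \<exists>v. v \<in> H \<inter> S"
    using hit unfolding \<B>_def by fastforce
  then obtain g where g: "\<forall>H\<in>\<B>. g H \<in> H \<inter> S"
    by (auto dest: bchoice)
  have "(\<Sum>H\<in>\<H>. Min (f ` H)) \<le> (\<Sum>H\<in>\<H>. if H \<in> \<B> then f (g H) else 0)"
  proof (rule sum_mono)
    fix H
    assume H: "H \<in> \<H>"
    show "Min (f ` H) \<le> (if H \<in> \<B> then f (g H) else 0)"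
    proof (cases "H \<in> \<B>")
      case True
      then show ?thesis
        using g H assms(2) by auto
    next
      case False
      then obtain x where "x \<in> H" "f x \<le> 0"
        using H unfolding \<B>_def by (auto simp: not_less)
      then show ?thesis
        using False H assms(2) by (auto intro: order_trans[OF Min_le])
    qed
  qed
  also have "\<dots> = (\<Sum>H\<in>\<H> \<inter> \<B>. f (g H))"
    using assms(1) by (rule sum.inter_restrict[symmetric])
  also have "\<H> \<inter> \<B> = \<B>"
    by (auto simp: \<B>_def)
  also have "(\<Sum>H\<in>\<B>. f (g H)) = sum f (g ` \<B>)"
  proof -
    have "inj_on g \<B>"
    proof (rule inj_onI)
      fix H1 H2
      assume H: "H1 \<in> \<B>" "H2 \<in> \<B>" "g H1 = g H2"
      then have "\<not> disjnt H1 H2"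
        using g by (metis IntD1 disjnt_iff)
      moreover have "H1 \<in> \<H>" "H2 \<in> \<H>"
        using H(1,2) by (simp_all add: \<B>_def)
      ultimately show "H1 = H2"
        using assms(3) by (meson pairwiseD)
    qed
    then show ?thesis
      by (simp add: sum.reindex)
  qed
  also have "\<dots> \<le> sum f S"
    using g assms(4,5) by (intro sum_mono2) auto
  finally show ?thesis .
qed

lemma MST_exists:
  assumes "finite E" "T \<subseteq> E" "is_tree V T"
  obtains M where "is_MST V E w M"
proof -
  define \<T> where "\<T> = {M. M \<subseteq> E \<and> is_tree V M}"
  have "finite \<T>"
    using assms(1) unfolding \<T>_def by (simp add: finite_subset[of _ "Pow E"] subset_iff)
  moreover have "T \<in> \<T>"
    using assms(2,3) by (simp add: \<T>_def)
  ultimately have "Min (sum w ` \<T>) \<in> sum w ` \<T>"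
    by (intro Min_in) auto
  then obtain M where M: "M \<in> \<T>" "sum w M = Min (sum w ` \<T>)"
    by (metis imageE)
  have "is_MST V E w M"
    unfolding is_MST_def
  proof (intro conjI allI impI)
    show "M \<subseteq> E" "is_tree V M"
      using M(1) by (simp_all add: \<T>_def)
    fix M'
    assume "M' \<subseteq> E \<and> is_tree V M'"
    then show "sum w M \<le> sum w M'"
      using M(2) \<open>finite \<T>\<close> by (simp add: \<T>_def)
  qed
  then show ?thesis
    by (rule that)
qed

lemma revenue_attained:
  assumes "is_tree V ET" "F \<subseteq> pairs V"
  obtains M where "is_MST V (ET \<union> F) (follower_weight c F p) M"
    "revenue V ET c F p = sum p (F \<inter> M)"
proof -
  let ?MSTs = "{M. is_MST V (ET \<union> F) (follower_weight c F p) M}"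
  have "finite (ET \<union> F)"
    using assms finite_pairs finite_subset unfolding is_tree_def by blast
  moreover have "?MSTs \<subseteq> Pow (ET \<union> F)"
    by (auto simp: is_MST_def)
  ultimately have "finite ((\<lambda>M. sum p (F \<inter> M)) ` ?MSTs)"
    by (meson finite_Pow_iff finite_imageI finite_subset)
  moreover obtain M0 where "M0 \<in> ?MSTs"
    using MST_exists[OF \<open>finite (ET \<union> F)\<close> _ assms(1)] by blast
  ultimately have "Max ((\<lambda>M. sum p (F \<inter> M)) ` ?MSTs) \<in> (\<lambda>M. sum p (F \<inter> M)) ` ?MSTs"
    by (intro Max_in) auto
  moreover have "revenue V ET c F p = Max ((\<lambda>M. sum p (F \<inter> M)) ` ?MSTs)"
    unfolding revenue_def by (simp add: image_Collect)
  ultimately have "revenue V ET c F p \<in> (\<lambda>M. sum p (F \<inter> M)) ` ?MSTs"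
    by simp
  then show ?thesis
    using that by blast
qed

lemma follower_weight_split:
  assumes "F \<inter> ET = {}" "M \<subseteq> ET \<union> F" "finite M"
  shows "sum (follower_weight c F p) M = sum p (F \<inter> M) + sum c (M \<inter> ET)"
proof -
  have "sum (follower_weight c F p) M
      = sum (follower_weight c F p) (M \<inter> F) + sum (follower_weight c F p) (M - F)"
    using assms(3) by (rule sum.Int_Diff)
  also have "M - F = M \<inter> ET"
    using assms(1,2) by blast
  also have "sum (follower_weight c F p) (M \<inter> F) = sum p (F \<inter> M)"
    by (simp add: follower_weight_def Int_commute)
  also have "sum (follower_weight c F p) (M \<inter> ET) = sum c (M \<inter> ET)"
    using assms(1) by (intro sum.cong) (auto simp: follower_weight_def)
  finally show ?thesis .
qed

lemma revenue_plus_red_cost_le: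
  assumes "is_tree V ET" "F \<subseteq> pairs V - ET"
  obtains M where "M \<subseteq> ET \<union> F" "connected_graph V M"
    "revenue V ET c F p + sum c (M \<inter> ET) \<le> sum c ET"
proof -
  let ?w = "follower_weight c F p"
  obtain M where M: "is_MST V (ET \<union> F) ?w M" "revenue V ET c F p = sum p (F \<inter> M)"
    using revenue_attained assms by blast
  then have MF: "M \<subseteq> ET \<union> F" and "is_tree V M"
    by (simp_all add: is_MST_def)
  have "finite M"
    using \<open>is_tree V M\<close> finite_pairs finite_subset unfolding is_tree_def by blast
  have "sum ?w M \<le> sum ?w ET"
    using M(1) assms(1) by (simp add: is_MST_def)
  also have "sum ?w ET = sum c ET"
    using assms(2) by (intro sum.cong) (auto simp: follower_weight_def)
  finally have "sum ?w M \<le> sum c ET" .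
  moreover have "F \<inter> ET = {}"
    using assms(2) by blast
  ultimately have "revenue V ET c F p + sum c (M \<inter> ET) \<le> sum c ET"
    using follower_weight_split[OF _ MF \<open>finite M\<close>, of c p] M(2) by simp
  moreover have "connected_graph V M"
    using \<open>is_tree V M\<close> by (simp add: is_tree_def)
  ultimately show ?thesis
    using that MF by blast
qed

locale rooted_tree =
  fixes V :: "'a set" and ET :: "'a set set" and v0 :: 'a
  assumes tree: "is_tree V ET" and root_in_V: "v0 \<in> V"
begin

abbreviation "dep \<equiv> depth ET v0"
abbreviation "par \<equiv> parent ET v0"
abbreviation "parent_edge v \<equiv> {parent ET v0 v, v}"

lemma finite_V: "finite V"
  using tree by (simp add: is_tree_def)

lemma finite_ET: "finite ET"
  using tree finite_V finite_pairs finite_subset unfolding is_tree_def by blast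

lemma tree_edgeD:
  assumes "{u, v} \<in> ET"
  shows "u \<in> V" "v \<in> V" "u \<noteq> v"
  using tree assms by (auto simp: is_tree_def pairs_def doubleton_eq_iff)

lemma walk_of_depth:
  assumes "v \<in> V"
  shows "(v0, v) \<in> adj ET ^^ dep v"
proof -
  have "(v0, v) \<in> (adj ET)\<^sup>*"
    using tree assms root_in_V by (simp add: is_tree_def connected_graph_def)
  then obtain n where "(v0, v) \<in> adj ET ^^ n"
    using rtrancl_power by blast
  then show ?thesis
    unfolding depth_def gdist_def by (rule LeastI)
qed

lemma depth_le_walk: "(v0, v) \<in> adj ET ^^ n \<Longrightarrow> dep v \<le> n"
  unfolding depth_def gdist_def by (rule Least_le)

lemma depth_root: "dep v0 = 0"
  using depth_le_walk[of v0 0] by simp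

lemma depth_edge_le:
  assumes "{u, v} \<in> ET"
  shows "dep v \<le> dep u + 1"
proof -
  have "(v0, u) \<in> adj ET ^^ dep u"
    using assms by (intro walk_of_depth tree_edgeD)
  moreover have "(u, v) \<in> adj ET"
    using assms by (simp add: adj_def)
  ultimately show ?thesis
    using depth_le_walk relpow_Suc_I by fastforce
qed

lemma exists_lower_neighbour:
  assumes "v \<in> V" "dep v = Suc k"
  obtains u where "{u, v} \<in> ET" "dep u = k"
proof -
  obtain u where u: "(v0, u) \<in> adj ET ^^ k" "(u, v) \<in> adj ET"
    using walk_of_depth[OF assms(1)] assms(2) by (auto elim: relpow_Suc_E)
  then have "{u, v} \<in> ET"
    by (simp add: adj_def)
  moreover have "dep u = k"
    using depth_le_walk[OF u(1)] depth_edge_le[OF \<open>{u, v} \<in> ET\<close>] assms(2) by simp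
  ultimately show ?thesis
    using that by blast
qed

definition shallow_edges :: "nat \<Rightarrow> 'a set set" where
  "shallow_edges k = {e \<in> ET. \<forall>x\<in>e. dep x \<le> k}"

lemma root_reaches_by_shallow_edges:
  assumes "u \<in> V" "dep u \<le> k" "shallow_edges k \<subseteq> E"
  shows "(v0, u) \<in> (adj E)\<^sup>*"
  using assms
proof (induction "dep u" arbitrary: u)
  case 0
  then have "(v0, u) \<in> adj ET ^^ 0"
    using walk_of_depth by metis
  then show ?case
    by simp
next
  case (Suc n)
  obtain w where w: "{w, u} \<in> ET" "dep w = n"
    using exists_lower_neighbour Suc.prems(1) Suc.hyps(2) by metis
  then have "(v0, w) \<in> (adj E)\<^sup>*"
    using Suc tree_edgeD(1) by simp
  moreover have "{w, u} \<in> shallow_edges k"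
    using w Suc by (auto simp: shallow_edges_def)
  then have "(w, u) \<in> adj E"
    using Suc.prems(3) by (auto simp: adj_def)
  ultimately show ?case
    by (rule rtrancl_into_rtrancl)
qed

text \<open>Both candidates are reached from v0 along edges of depth at most dep u, so u' yields a
  path from u to v avoiding the tree edge {u, v}.\<close>
lemma parent_unique:
  assumes "{u, v} \<in> ET" "{u', v} \<in> ET" "dep u + 1 = dep v" "dep u' + 1 = dep v"
  shows "u = u'"
proof (rule ccontr)
  assume "u \<noteq> u'"
  let ?E = "ET - {{u, v}}"
  have "shallow_edges (dep u) \<subseteq> ?E"
    using assms(3) by (auto simp: shallow_edges_def)
  moreover have "u \<in> V" "u' \<in> V" "dep u' \<le> dep u"
    using assms tree_edgeD by auto
  ultimately have "(v0, u) \<in> (adj ?E)\<^sup>*" "(v0, u') \<in> (adj ?E)\<^sup>*"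
    by (auto intro: root_reaches_by_shallow_edges)
  moreover have "(u', v) \<in> adj ?E"
    using assms(2) \<open>u \<noteq> u'\<close> tree_edgeD(3)[OF assms(1)] by (auto simp: adj_def doubleton_eq_iff)
  ultimately have "(u, v) \<in> (adj ?E)\<^sup>*"
    by (meson rtrancl_adj_sym rtrancl_trans r_into_rtrancl)
  then show False
    using tree_edge_is_bridge[OF tree assms(1) tree_edgeD(3)[OF assms(1)]] by blast
qed

lemma parent_edge_depth:
  assumes "v \<in> V" "dep v \<ge> 1"
  shows "parent_edge v \<in> ET" "dep (par v) + 1 = dep v"
proof -
  obtain k where k: "dep v = Suc k"
    using assms(2) by (cases "dep v") auto
  obtain u where u: "{u, v} \<in> ET" "dep u + 1 = dep v"
    using exists_lower_neighbour[OF assms(1) k] k by auto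
  have "par v = u"
    unfolding parent_def using u parent_unique by blast
  with u show "parent_edge v \<in> ET" "dep (par v) + 1 = dep v"
    by auto
qed

abbreviation "Vi \<equiv> layer V ET v0"
abbreviation "Ei \<equiv> layer_edges V ET v0"
abbreviation "hat \<equiv> hatT V ET v0"

lemma layer_iff: "v \<in> Vi i \<longleftrightarrow> v \<in> V \<and> dep v = i"
  by (simp add: layer_def)

lemma layer_parent_edge:
  assumes "v \<in> Vi i" "1 \<le> i"
  shows "parent_edge v \<in> ET" "dep (par v) + 1 = i" "par v \<in> V" "par v \<noteq> v" "v \<noteq> v0"
proof -
  show "parent_edge v \<in> ET" "dep (par v) + 1 = i"
    using parent_edge_depth assms by (auto simp: layer_iff)
  then show "par v \<in> V" "par v \<noteq> v"
    using tree_edgeD by blast+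
  show "v \<noteq> v0"
    using assms depth_root by (auto simp: layer_iff)
qed

lemma layer_edgesE:
  assumes "e \<in> Ei i"
  obtains v where "v \<in> Vi i" "e = parent_edge v"
  using assms by (auto simp: layer_edges_def)

lemma parent_edge_in_layer_edges: "v \<in> Vi i \<Longrightarrow> parent_edge v \<in> Ei i"
  by (auto simp: layer_edges_def)

lemma layer_edges_subset: "1 \<le> i \<Longrightarrow> Ei i \<subseteq> ET"
  using layer_parent_edge(1) by (metis layer_edgesE subsetI)

lemma shallow_edges_avoid_layer_edges:
  assumes "k < i"
  shows "shallow_edges k \<subseteq> ET - Ei i"
proof
  fix e
  assume e: "e \<in> shallow_edges k"
  have "e \<notin> Ei i"
  proof
    assume "e \<in> Ei i"
    then obtain v where "v \<in> Vi i" "e = parent_edge v"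
      by (rule layer_edgesE)
    then show False
      using e assms by (auto simp: shallow_edges_def layer_iff)
  qed
  then show "e \<in> ET - Ei i"
    using e by (simp add: shallow_edges_def)
qed

lemma inj_on_parent_edge:
  assumes "1 \<le> i"
  shows "inj_on (\<lambda>v. parent_edge v) (Vi i)"
proof (rule inj_onI)
  fix v w
  assume vw: "v \<in> Vi i" "w \<in> Vi i" "parent_edge v = parent_edge w"
  show "v = w"
  proof (rule ccontr)
    assume "v \<noteq> w"
    then have "v = par w"
      using vw(3) by (auto simp: doubleton_eq_iff)
    then show False
      using layer_parent_edge(2)[OF vw(2) assms] vw(1) by (simp add: layer_iff)
  qed
qed

lemma layer_edges_disjoint:
  assumes "1 \<le> i" "1 \<le> j" "e \<in> Ei i" "e \<in> Ei j"
  shows "i = j"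
proof -
  obtain v where v: "v \<in> Vi i" "e = parent_edge v"
    using assms(3) by (rule layer_edgesE)
  obtain w where w: "w \<in> Vi j" "e = parent_edge w"
    using assms(4) by (rule layer_edgesE)
  have "par v = par w \<and> v = w \<or> par v = w \<and> v = par w"
    using v(2) w(2) by (auto simp: doubleton_eq_iff)
  moreover have "dep v = i" "dep w = j"
    using v(1) w(1) by (simp_all add: layer_iff)
  ultimately show ?thesis
    using layer_parent_edge(2)[OF v(1) assms(1)] layer_parent_edge(2)[OF w(1) assms(2)] by auto
qed

lemma root_reaches_parent:
  assumes "v \<in> Vi i" "1 \<le> i"
  shows "(v0, par v) \<in> (adj (ET - Ei i))\<^sup>*"
proof (rule root_reaches_by_shallow_edges)
  show "par v \<in> V" "dep (par v) \<le> i - 1"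
    using layer_parent_edge[OF assms] by auto
  show "shallow_edges (i - 1) \<subseteq> ET - Ei i"
    using assms(2) by (intro shallow_edges_avoid_layer_edges) simp
qed

lemma rtrancl_adj_avoid_parent_edge:
  assumes "v \<in> Vi i" "(x, y) \<in> (adj (ET - Ei i))\<^sup>*"
  shows "(x, y) \<in> (adj (ET - {parent_edge v}))\<^sup>*"
proof (rule rtrancl_adj_mono[OF _ assms(2)])
  show "ET - Ei i \<subseteq> ET - {parent_edge v}"
    using parent_edge_in_layer_edges[OF assms(1)] by blast
qed

lemma parent_edge_is_bridge:
  assumes "v \<in> Vi i" "1 \<le> i"
  shows "(par v, v) \<notin> (adj (ET - {parent_edge v}))\<^sup>*"
  using tree_edge_is_bridge[OF tree layer_parent_edge(1,4)[OF assms]] .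

lemma root_not_reaches_layer:
  assumes "v \<in> Vi i" "1 \<le> i"
  shows "(v0, v) \<notin> (adj (ET - Ei i))\<^sup>*"
proof
  assume "(v0, v) \<in> (adj (ET - Ei i))\<^sup>*"
  with rtrancl_adj_sym[OF root_reaches_parent[OF assms]]
  have "(par v, v) \<in> (adj (ET - Ei i))\<^sup>*"
    by (rule rtrancl_trans)
  then show False
    using parent_edge_is_bridge[OF assms] rtrancl_adj_avoid_parent_edge[OF assms(1)] by blast
qed

text \<open>A walk from a to v avoiding E_i would continue from a to its parent and back to v0,
  hence reach the parent of v without using the edge above v.\<close>
lemma layer_vertices_separated:
  assumes "a \<in> Vi i" "v \<in> Vi i" "a \<noteq> v" "1 \<le> i"
  shows "(a, v) \<notin> (adj (ET - Ei i))\<^sup>*"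
proof
  let ?E = "ET - {parent_edge v}"
  assume "(a, v) \<in> (adj (ET - Ei i))\<^sup>*"
  then have "(v, a) \<in> (adj ?E)\<^sup>*"
    by (rule rtrancl_adj_sym[OF rtrancl_adj_avoid_parent_edge[OF assms(2)]])
  moreover have "parent_edge a \<noteq> parent_edge v"
    using inj_on_parent_edge[OF assms(4)] assms(1-3) by (meson inj_on_contraD)
  then have "{a, par a} \<in> ?E"
    using layer_parent_edge(1)[OF assms(1,4)] by (simp add: insert_commute)
  then have "(a, par a) \<in> adj ?E"
    by (simp add: adj_def)
  moreover have "(par a, v0) \<in> (adj ?E)\<^sup>*"
    using root_reaches_parent[OF assms(1,4)]
    by (rule rtrancl_adj_sym[OF rtrancl_adj_avoid_parent_edge[OF assms(2)]])
  moreover have "(v0, par v) \<in> (adj ?E)\<^sup>*"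
    using root_reaches_parent[OF assms(2,4)] by (rule rtrancl_adj_avoid_parent_edge[OF assms(2)])
  ultimately have "(v, par v) \<in> (adj ?E)\<^sup>*"
    by (meson rtrancl_into_rtrancl rtrancl_trans)
  then show False
    using parent_edge_is_bridge[OF assms(2,4)] rtrancl_adj_sym[of v "par v"] by blast
qed

lemma layer_reaches_deeper:
  assumes "1 \<le> i" "w \<in> V" "dep w = i + k"
  shows "\<exists>b\<in>Vi i. (b, w) \<in> (adj (ET - Ei i))\<^sup>*"
  using assms(2,3)
proof (induction k arbitrary: w)
  case 0
  then show ?case
    by (auto simp: layer_iff)
next
  case (Suc k)
  obtain u where u: "{u, w} \<in> ET" "dep u = i + k"
    using exists_lower_neighbour Suc.prems by (metis add_Suc_right)
  then obtain b where b: "b \<in> Vi i" "(b, u) \<in> (adj (ET - Ei i))\<^sup>*"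
    using Suc.IH tree_edgeD(1) by blast
  have "{u, w} \<notin> Ei i"
  proof
    assume "{u, w} \<in> Ei i"
    then obtain v where v: "v \<in> Vi i" "{u, w} = parent_edge v"
      by (rule layer_edgesE)
    then have "w = v \<or> w = par v"
      by (auto simp: doubleton_eq_iff)
    then show False
      using layer_parent_edge(2)[OF v(1) assms(1)] v(1) Suc.prems(2) by (auto simp: layer_iff)
  qed
  then have "(u, w) \<in> adj (ET - Ei i)"
    using u(1) by (simp add: adj_def)
  with b show ?case
    by (meson rtrancl_into_rtrancl)
qed

lemma hatT_cover:
  assumes "w \<in> V" "1 \<le> i"
  shows "\<exists>b \<in> insert v0 (Vi i). w \<in> hatT V ET v0 i b"
proof (cases "dep w < i")
  case True
  then have "shallow_edges (dep w) \<subseteq> ET - Ei i"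
    by (rule shallow_edges_avoid_layer_edges)
  with assms(1) have "(v0, w) \<in> (adj (ET - Ei i))\<^sup>*"
    by (rule root_reaches_by_shallow_edges[OF _ order_refl])
  then show ?thesis
    using assms(1) by (auto simp: hatT_def)
next
  case False
  then obtain b where "b \<in> Vi i" "(b, w) \<in> (adj (ET - Ei i))\<^sup>*"
    using layer_reaches_deeper[OF assms(2,1), of "dep w - i"] by auto
  then show ?thesis
    using assms(1) by (auto simp: hatT_def)
qed

lemma Gcomps_subset: "H \<in> Gcomps V ET v0 i F \<Longrightarrow> H \<subseteq> insert v0 (Vi i)"
  unfolding Gcomps_def by (rule comps_subset)

lemma blue_edge_stays_in_component:
  assumes "1 \<le> i" "F \<subseteq> pairs V" "H \<in> Gcomps V ET v0 i F"
    and "a \<in> H" "y \<in> hat i a" "{y, z} \<in> F"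
  shows "\<exists>b\<in>H. z \<in> hat i b"
proof -
  have "z \<in> V"
    using assms(2,6) by (auto simp: pairs_def doubleton_eq_iff)
  then obtain b where b: "b \<in> insert v0 (Vi i)" "z \<in> hat i b"
    using hatT_cover assms(1) by blast
  have "b \<in> H" if "a \<noteq> b"
  proof (rule comps_closed[OF assms(3)[unfolded Gcomps_def] assms(4) b(1)])
    have "{a, b} \<in> contracted_edges V ET v0 i F"
      unfolding contracted_edges_def
      using Gcomps_subset[OF assms(3)] assms(4-6) b that by blast
    then show "(a, b) \<in> adj (contracted_edges V ET v0 i F)"
      by (simp add: adj_def)
  qed
  then show ?thesis
    using assms(4) b(2) by blast
qed

lemma layer_edge_at_hatT:
  assumes i: "1 \<le> i" and a: "a \<in> Vi i" "y \<in> hat i a" and v: "v \<in> Vi i" "y \<in> parent_edge v"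
  shows "v = a"
proof -
  have ay: "(a, y) \<in> (adj (ET - Ei i))\<^sup>*"
    using a(2) by (simp add: hatT_def)
  consider "y = par v" | "y = v"
    using v(2) by blast
  then show ?thesis
  proof cases
    case 1
    then have "(v0, a) \<in> (adj (ET - Ei i))\<^sup>*"
      using root_reaches_parent[OF v(1) i] rtrancl_adj_sym[OF ay] by (blast intro: rtrancl_trans)
    then show ?thesis
      using root_not_reaches_layer[OF a(1) i] by blast
  next
    case 2
    then show ?thesis
      using layer_vertices_separated[OF a(1) v(1) _ i] ay by blast
  qed
qed

text \<open>A connected spanning subgraph must leave the region of T - E_i attached to a component
  H of G*_i avoiding v0; it can only do so along the tree edge above some vertex of H.\<close>
lemma connected_subgraph_uses_parent_edge:
  assumes i: "1 \<le> i" and MF: "M \<subseteq> ET \<union> F" and FV: "F \<subseteq> pairs V"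
    and M: "connected_graph V M"
    and H: "H \<in> Gcomps V ET v0 i F" and v0H: "v0 \<notin> H"
  shows "\<exists>v\<in>H. parent_edge v \<in> M"
proof -
  obtain x where "x \<in> H"
    using comps_nonempty H unfolding Gcomps_def by blast
  define U where "U = (\<Union>a\<in>H. hat i a)"
  have HVi: "H \<subseteq> Vi i"
    using Gcomps_subset[OF H] v0H by blast
  have "x \<in> V"
    using \<open>x \<in> H\<close> HVi by (simp add: subset_iff layer_iff)
  then have "x \<in> U"
    using \<open>x \<in> H\<close> by (auto simp: U_def hatT_def)
  have "v0 \<notin> U"
  proof
    assume "v0 \<in> U"
    then obtain a where "a \<in> H" "(a, v0) \<in> (adj (ET - Ei i))\<^sup>*"
      by (auto simp: U_def hatT_def)
    then show False
      using root_not_reaches_layer[OF _ i] rtrancl_adj_sym[of a v0] HVi by blast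
  qed
  have "(x, v0) \<in> (adj M)\<^sup>*"
    using M \<open>x \<in> V\<close> root_in_V by (simp add: connected_graph_def)
  then obtain y z where yz: "(y, z) \<in> adj M" "y \<in> U" "z \<notin> U"
    using \<open>x \<in> U\<close> \<open>v0 \<notin> U\<close> by (rule rtrancl_leaves_set)
  then obtain a where a: "a \<in> H" "(a, y) \<in> (adj (ET - Ei i))\<^sup>*"
    by (auto simp: U_def hatT_def)
  have "{y, z} \<notin> ET - Ei i"
  proof
    assume e: "{y, z} \<in> ET - Ei i"
    then have "(a, z) \<in> (adj (ET - Ei i))\<^sup>*"
      using a(2) by (auto simp: adj_def intro: rtrancl_into_rtrancl)
    then show False
      using yz(3) a(1) tree_edgeD(2)[of y z] e by (auto simp: U_def hatT_def)
  qed
  moreover have "{y, z} \<notin> F"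
    using blue_edge_stays_in_component[OF i FV H a(1)] a yz(2,3) unfolding U_def
    by (force simp: hatT_def)
  ultimately have "{y, z} \<in> Ei i"
    using yz(1) MF by (auto simp: adj_def)
  then obtain v where v: "v \<in> Vi i" "{y, z} = parent_edge v"
    by (rule layer_edgesE)
  moreover have "a \<in> Vi i" "y \<in> hat i a"
    using a HVi yz(2) by (auto simp: U_def hatT_def)
  ultimately have "v = a"
    by (auto intro: layer_edge_at_hatT[OF i])
  then show ?thesis
    using a(1) v(2) yz(1) by (auto simp: adj_def)
qed

lemma sum_Gcomps_le_layer_edges:
  assumes i: "1 \<le> i" and MF: "M \<subseteq> ET \<union> F" and FV: "F \<subseteq> pairs V"
    and M: "connected_graph V M" and c_nonneg: "\<forall>e\<in>ET. 0 \<le> c e"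
  shows "(\<Sum>H\<in>Gcomps V ET v0 i F. Min (layer_cost ET c v0 ` H)) \<le> sum c (M \<inter> Ei i)"
proof -
  define S where "S = {v \<in> Vi i. parent_edge v \<in> M}"
  have finite_layer: "finite (insert v0 (Vi i))"
    using finite_V by (simp add: layer_def)
  have cost_S: "layer_cost ET c v0 v = c (parent_edge v)" "0 \<le> c (parent_edge v)"
    if "v \<in> Vi i" for v
    using layer_parent_edge[OF that i] c_nonneg by (auto simp: layer_cost_def)
  have "(\<Sum>H\<in>Gcomps V ET v0 i F. Min (layer_cost ET c v0 ` H)) \<le> sum (layer_cost ET c v0) S"
  proof (rule sum_Min_le_sum_hitting_set)
    show "finite (Gcomps V ET v0 i F)"
      unfolding Gcomps_def by (rule finite_comps[OF finite_layer])
    show "\<forall>H\<in>Gcomps V ET v0 i F. finite H"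
      using finite_subset[OF Gcomps_subset finite_layer] by blast
    show "pairwise disjnt (Gcomps V ET v0 i F)"
      by (simp add: Gcomps_def pairwise_disjnt_comps)
    show "finite S"
      using finite_layer by (simp add: S_def)
    show "\<forall>v\<in>S. 0 \<le> layer_cost ET c v0 v"
      using cost_S by (simp add: S_def)
    show "\<forall>H\<in>Gcomps V ET v0 i F. (\<exists>x\<in>H. layer_cost ET c v0 x \<le> 0) \<or> H \<inter> S \<noteq> {}"
    proof
      fix H
      assume H: "H \<in> Gcomps V ET v0 i F"
      show "(\<exists>x\<in>H. layer_cost ET c v0 x \<le> 0) \<or> H \<inter> S \<noteq> {}"
      proof (cases "v0 \<in> H")
        case True
        then show ?thesis
          by (auto simp: layer_cost_def)
      next
        case False
        then obtain v where "v \<in> H" "parent_edge v \<in> M"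
          using connected_subgraph_uses_parent_edge[OF i MF FV M H] by blast
        moreover have "v \<in> Vi i"
          using Gcomps_subset[OF H] False \<open>v \<in> H\<close> by blast
        ultimately show ?thesis
          by (auto simp: S_def)
      qed
    qed
  qed
  also have "\<dots> = (\<Sum>v\<in>S. c (parent_edge v))"
    using cost_S by (simp add: S_def)
  also have "\<dots> = sum c ((\<lambda>v. parent_edge v) ` S)"
    using inj_on_subset[OF inj_on_parent_edge[OF i]] by (simp add: S_def sum.reindex)
  also have "(\<lambda>v. parent_edge v) ` S = M \<inter> Ei i"
    by (auto simp: S_def layer_edges_def)
  finally show ?thesis .
qed

lemma sum_layers_le_red_cost:
  assumes MF: "M \<subseteq> ET \<union> F" and FV: "F \<subseteq> pairs V"
    and M: "connected_graph V M" and c_nonneg: "\<forall>e\<in>ET. 0 \<le> c e"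
  shows "(\<Sum>i = 1..h. \<Sum>H\<in>Gcomps V ET v0 i F. Min (layer_cost ET c v0 ` H)) \<le> sum c (M \<inter> ET)"
proof -
  have "(\<Sum>i = 1..h. \<Sum>H\<in>Gcomps V ET v0 i F. Min (layer_cost ET c v0 ` H))
        \<le> (\<Sum>i = 1..h. sum c (M \<inter> Ei i))"
    using sum_Gcomps_le_layer_edges[OF _ assms] by (intro sum_mono) simp
  also have "\<dots> = sum c (\<Union>i\<in>{1..h}. M \<inter> Ei i)"
  proof (rule sum.UNION_disjoint[symmetric])
    show "\<forall>i\<in>{1..h}. finite (M \<inter> Ei i)"
      using layer_edges_subset finite_ET by (meson atLeastAtMost_iff finite_Int finite_subset)
    show "\<forall>i\<in>{1..h}. \<forall>j\<in>{1..h}. i \<noteq> j \<longrightarrow> M \<inter> Ei i \<inter> (M \<inter> Ei j) = {}"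
      using layer_edges_disjoint by fastforce
  qed simp
  also have "\<dots> \<le> sum c (M \<inter> ET)"
  proof (rule sum_mono2)
    show "(\<Union>i\<in>{1..h}. M \<inter> Ei i) \<subseteq> M \<inter> ET"
      using layer_edges_subset by fastforce
  qed (use finite_ET c_nonneg in auto)
  finally show ?thesis .
qed

end

theorem lemma6:
  fixes V :: "'a set" and ET :: "'a set set"
    and c \<gamma> :: "'a set \<Rightarrow> real" and \<Delta> :: real
    and Fs :: "'a set set" and ps :: "'a set \<Rightarrow> real" and v0 :: 'a
  assumes tree: "is_tree V ET"
    and c_nonneg: "\<forall>e\<in>ET. c e \<ge> 0"
    and \<gamma>_nonneg: "\<forall>e\<in>pairs V - ET. \<gamma> e \<ge> 0"
    and center: "is_center V ET v0"
    and opt: "optimal V ET c \<gamma> \<Delta> Fs ps"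
  shows "revenue V ET c Fs ps \<le> sum c ET -
           (\<Sum>i = 1..height V ET v0. \<Sum>H \<in> Gcomps V ET v0 i Fs. Min (layer_cost ET c v0 ` H))"
proof -
  interpret rooted_tree V ET v0
    using tree center by unfold_locales (auto simp: is_center_def)
  have Fs: "Fs \<subseteq> pairs V - ET"
    using opt by (simp add: optimal_def feasible_def)
  then obtain M where M: "M \<subseteq> ET \<union> Fs" "connected_graph V M"
    "revenue V ET c Fs ps + sum c (M \<inter> ET) \<le> sum c ET"
    using revenue_plus_red_cost_le[OF tree] by blast
  have "(\<Sum>i = 1..height V ET v0. \<Sum>H \<in> Gcomps V ET v0 i Fs. Min (layer_cost ET c v0 ` H))
        \<le> sum c (M \<inter> ET)"
    using M(1,2) Fs c_nonneg by (intro sum_layers_le_red_cost) auto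
  with M(3) show ?thesis
    by linarith
qed

end
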